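(* Let $G=(V,E)$ be a simple 2-vertex-connected graph without irrelevant edges, let $\{u,v\}$ be a 2-vertex-cut of $G$, let $(V_1,V_2)$ with $V_1\ne\emptyset\ne V_2$ be a partition of $V\setminus\{u,v\}$ with no edges of $G$ between $V_1$ and $V_2$, and let $H\subseteq E$ be such that $(V,H)$ is a 2-edge-connected spanning subgraph of $G$. For $i\in\{1,2\}$ let $G_i=G[V_i\cup\{u,v\}]$ and $H_i=E(G_i)\cap H$ (viewed as a subgraph on node set $V_i\cup\{u,v\}$). Then: (1) each of $H_1,H_2$ is of type A, B or C with respect to $\{u,v\}$, and if one of them is of type C then the other is of type A; (2) if $H_i$ is of type C then there is an edge $f\in E(G_i)$ such that $H_i\cup\{f\}$ is of type B; consequently there exists a 2-edge-connected spanning subgraph $H'$ of $G$ such that $H'\cap E(G_i)$ is of type A or B.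
   Context: A graph is 2-edge-connected (2EC) if connected and it stays connected after removal of any one edge; 2-vertex-connected if it has at least 3 nodes, is connected and has no 1-vertex-cut. An edge $xy$ is irrelevant if $\{x,y\}$ is a 2-vertex-cut. For a graph $K$ and nodes $u,v\in V(K)$: the 2EC components of $K$ are its maximal 2EC subgraphs, where a single node not contained in any 2EC subgraph with at least 2 nodes counts as its own (degenerate) 2EC component; let $K'$ be obtained by contracting each 2EC component into a super-node, and let $C(u),C(v)$ be the super-nodes containing $u,v$. $K$ is of type A w.r.t. $\{u,v\}$ if $K'$ is a single super-node $C(u)=C(v)$; of type B if $K'$ is a $C(u)$-$C(v)$ path with at least one edge; of type C if $K'$ consists of exactly two isolated super-nodes $C(u)$ and $C(v)$. *)

theory Defs
  imports Main
begin

definition simple_graph :: "'a set \<Rightarrow> 'a set set \<Rightarrow> bool" where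
  "simple_graph V E \<longleftrightarrow> finite V \<and> (\<forall>e\<in>E. \<exists>x y. e = {x, y} \<and> x \<noteq> y \<and> x \<in> V \<and> y \<in> V)"

definition adj :: "'a set set \<Rightarrow> ('a \<times> 'a) set" where
  "adj F = {(a, b). {a, b} \<in> F}"

text \<open>Connectivity of the graph (X, F), where F is assumed to consist of edges inside X.\<close>
definition gconnected :: "'a set \<Rightarrow> 'a set set \<Rightarrow> bool" where
  "gconnected X F \<longleftrightarrow> (\<forall>x\<in>X. \<forall>y\<in>X. (x, y) \<in> (adj F)\<^sup>*)"

definition two_edge_connected :: "'a set \<Rightarrow> 'a set set \<Rightarrow> bool" where
  "two_edge_connected X F \<longleftrightarrow> gconnected X F \<and> (\<forall>e\<in>F. gconnected X (F - {e}))"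

definition two_vertex_connected :: "'a set \<Rightarrow> 'a set set \<Rightarrow> bool" where
  "two_vertex_connected V E \<longleftrightarrow> 3 \<le> card V \<and> gconnected V E \<and>
     (\<forall>x\<in>V. gconnected (V - {x}) {e\<in>E. x \<notin> e})"

definition two_vertex_cut :: "'a set \<Rightarrow> 'a set set \<Rightarrow> 'a \<Rightarrow> 'a \<Rightarrow> bool" where
  "two_vertex_cut V E x y \<longleftrightarrow> x \<in> V \<and> y \<in> V \<and> x \<noteq> y \<and>
     \<not> gconnected (V - {x, y}) {e\<in>E. x \<notin> e \<and> y \<notin> e}"

definition irrelevant_edge :: "'a set \<Rightarrow> 'a set set \<Rightarrow> 'a set \<Rightarrow> bool" where
  "irrelevant_edge V E e \<longleftrightarrow> e \<in> E \<and> (\<exists>x y. e = {x, y} \<and> two_vertex_cut V E x y)"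

definition induced_edges :: "'a set set \<Rightarrow> 'a set \<Rightarrow> 'a set set" where
  "induced_edges E S = {e\<in>E. e \<subseteq> S}"

text \<open>X is the node set of a 2EC component of K = (W, F): X carries a 2EC subgraph of K
  and is maximal with this property (single nodes are degenerate 2EC subgraphs).\<close>
definition has_2ec_subgraph_on :: "'a set \<Rightarrow> 'a set set \<Rightarrow> 'a set \<Rightarrow> bool" where
  "has_2ec_subgraph_on W F X \<longleftrightarrow> X \<subseteq> W \<and> X \<noteq> {} \<and>
     (\<exists>F'. F' \<subseteq> F \<and> (\<forall>e\<in>F'. e \<subseteq> X) \<and> two_edge_connected X F')"

definition is_2ec_comp :: "'a set \<Rightarrow> 'a set set \<Rightarrow> 'a set \<Rightarrow> bool" where
  "is_2ec_comp W F X \<longleftrightarrow> has_2ec_subgraph_on W F X \<and>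
     (\<forall>Y. X \<subset> Y \<longrightarrow> \<not> has_2ec_subgraph_on W F Y)"

text \<open>The contracted graph K': super-nodes and super-edges.\<close>
definition comps :: "'a set \<Rightarrow> 'a set set \<Rightarrow> 'a set set" where
  "comps W F = {X. is_2ec_comp W F X}"

definition comp_of :: "'a set \<Rightarrow> 'a set set \<Rightarrow> 'a \<Rightarrow> 'a set" where
  "comp_of W F x = (THE X. X \<in> comps W F \<and> x \<in> X)"

definition comp_edges :: "'a set \<Rightarrow> 'a set set \<Rightarrow> 'a set set set" where
  "comp_edges W F = {{X, Y} | X Y. X \<in> comps W F \<and> Y \<in> comps W F \<and> X \<noteq> Y \<and>
                         (\<exists>a\<in>X. \<exists>b\<in>Y. {a, b} \<in> F)}"

definition type_A :: "'a set \<Rightarrow> 'a set set \<Rightarrow> 'a \<Rightarrow> 'a \<Rightarrow> bool" where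
  "type_A W F u v \<longleftrightarrow> comps W F = {comp_of W F u} \<and> comp_of W F u = comp_of W F v
     \<and> comp_edges W F = {}"

definition type_B :: "'a set \<Rightarrow> 'a set set \<Rightarrow> 'a \<Rightarrow> 'a \<Rightarrow> bool" where
  "type_B W F u v \<longleftrightarrow> (\<exists>ps. distinct ps \<and> 2 \<le> length ps \<and>
     hd ps = comp_of W F u \<and> last ps = comp_of W F v \<and>
     set ps = comps W F \<and>
     comp_edges W F = {{ps ! i, ps ! Suc i} | i. Suc i < length ps})"

definition type_C :: "'a set \<Rightarrow> 'a set set \<Rightarrow> 'a \<Rightarrow> 'a \<Rightarrow> bool" where
  "type_C W F u v \<longleftrightarrow> comps W F = {comp_of W F u, comp_of W F v} \<and>
     comp_of W F u \<noteq> comp_of W F v \<and> comp_edges W F = {}"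

end

theory Submission
  imports Defs
begin

text \<open>
  Because H is 2-edge-connected and {u, v} separates the two sides, every node of a side
  G_i reaches u or v inside H_i, even after deleting any one edge of H_i.
  If u and v are linked in H_i, every bridge of H_i therefore separates u from v, and
  cutting at the bridges splits H_i into a chain of 2EC components from C(u) to C(v):
  type A or B. Otherwise the classes of u and of v in H_i are themselves 2-edge-connected:
  type C. Then every u-v path of H (and of H minus an edge) runs through the other side,
  which is consequently 2-edge-connected, i.e. of type A. Finally, since G - u and G - v are
  connected, some edge of G_i joins the two classes; added to H_i it links u and v
  without creating a 2EC component containing both, giving type B.
\<close>

section \<open>Reachability\<close>

abbreviation reach :: "'a set set \<Rightarrow> 'a \<Rightarrow> 'a \<Rightarrow> bool" where
  "reach F x y \<equiv> (x, y) \<in> (adj F)\<^sup>*"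

lemma adj_iff: "(a, b) \<in> adj F \<longleftrightarrow> {a, b} \<in> F"
  by (simp add: adj_def)

lemma reach_sym: "reach F x y \<Longrightarrow> reach F y x"
proof -
  have "sym (adj F)" by (auto simp: sym_def adj_def insert_commute)
  then have "sym ((adj F)\<^sup>*)" by (rule sym_rtrancl)
  then show "reach F x y \<Longrightarrow> reach F y x" by (auto simp: sym_def)
qed

lemma reach_sym_iff: "reach F x y \<longleftrightarrow> reach F y x"
  by (rule iffI) (erule reach_sym)+

lemma reach_mono: "reach F x y \<Longrightarrow> F \<subseteq> F' \<Longrightarrow> reach F' x y"
proof -
  assume "reach F x y" "F \<subseteq> F'"
  moreover have "adj F \<subseteq> adj F'" using \<open>F \<subseteq> F'\<close> by (auto simp: adj_def)
  ultimately show ?thesis using rtrancl_mono by blast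
qed

lemma reach_diff: "reach (F - X) x y \<Longrightarrow> reach F x y"
  by (erule reach_mono) blast

lemma reach_edge: "{a, b} \<in> F \<Longrightarrow> reach F a b"
  by (simp add: adj_iff r_into_rtrancl)

lemma reach_step: "reach F x a \<Longrightarrow> {a, b} \<in> F \<Longrightarrow> reach F x b"
  by (simp add: adj_iff rtrancl_into_rtrancl)

lemma reach_invariant:
  assumes "reach F x y" "x \<in> S" "\<And>a b. {a, b} \<in> F \<Longrightarrow> a \<in> S \<Longrightarrow> b \<in> S"
  shows "y \<in> S"
  using assms(1,2) by induction (auto simp: adj_iff intro: assms(3))

lemma reach_restrict:
  assumes "reach F x y" "x \<in> S" "\<And>a b. {a, b} \<in> F \<Longrightarrow> a \<in> S \<Longrightarrow> b \<in> S"
  shows "reach {e\<in>F. e \<subseteq> S} x y"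
  using assms(1)
proof induction
  case (step z w)
  have "z \<in> S" using reach_invariant[OF step.hyps(1) assms(2,3)] .
  moreover have "{z, w} \<in> F" using step.hyps(2) by (simp add: adj_iff)
  ultimately show ?case using assms(3) reach_step[OF step.IH] by blast
qed simp

lemma gconnectedI_hub: "(\<And>z. z \<in> X \<Longrightarrow> reach F z c) \<Longrightarrow> gconnected X F"
  unfolding gconnected_def by (meson reach_sym rtrancl_trans)

lemma gconnected_if_reach_terminals:
  assumes "\<forall>z\<in>X. reach F z u \<or> reach F z v" "reach F u v"
  shows "gconnected X F"
proof (rule gconnectedI_hub[where c = u])
  fix z assume "z \<in> X"
  then consider "reach F z u" | "reach F z v" using assms(1) by blast
  then show "reach F z u"
    by cases (use rtrancl_trans[OF _ reach_sym[OF assms(2)]] in blast)+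
qed

lemma gconnected_mono: "gconnected X F \<Longrightarrow> F \<subseteq> F' \<Longrightarrow> gconnected X F'"
  unfolding gconnected_def using reach_mono[where F = F and F' = F'] by blast

lemma two_edge_connected_minus: "two_edge_connected X F \<Longrightarrow> gconnected X (F - {e})"
  unfolding two_edge_connected_def by (cases "e \<in> F") auto

lemma two_edge_connected_mono:
  assumes "two_edge_connected X F" "F \<subseteq> F'"
  shows "two_edge_connected X F'"
  unfolding two_edge_connected_def
proof (intro conjI ballI)
  show "gconnected X F'" using assms gconnected_mono unfolding two_edge_connected_def by blast
  fix e
  have "F - {e} \<subseteq> F' - {e}" using assms(2) by blast
  then show "gconnected X (F' - {e})"
    by (rule gconnected_mono[OF two_edge_connected_minus[OF assms(1)]])
qed

lemma reach_endpoint_minus_edge: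
  assumes "gconnected W F" "a \<in> W" "z \<in> W"
  shows "reach (F - {{a, b}}) z a \<or> reach (F - {{a, b}}) z b"
proof (rule ccontr)
  assume n: "\<not> ?thesis"
  have "reach F z a" using assms unfolding gconnected_def by blast
  then have "a \<in> {y. reach (F - {{a, b}}) z y}"
  proof (rule reach_invariant)
    fix x y assume xy: "{x, y} \<in> F" "x \<in> {y. reach (F - {{a, b}}) z y}"
    show "y \<in> {y. reach (F - {{a, b}}) z y}"
    proof (cases "{x, y} = {a, b}")
      case True
      then have "x = a \<or> x = b" by (auto simp: doubleton_eq_iff)
      then show ?thesis using xy(2) n by auto
    next
      case False
      then show ?thesis using xy reach_step[where F = "F - {{a, b}}" and x = z and a = x and b = y] by simp
    qed
  qed simp
  then show False using n by simp
qed

lemma simple_graph_subset: "simple_graph W F \<Longrightarrow> e \<in> F \<Longrightarrow> e \<subseteq> W"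
  unfolding simple_graph_def by fastforce

lemma simple_graph_edge: "simple_graph W F \<Longrightarrow> {x, y} \<in> F \<Longrightarrow> x \<in> W \<and> y \<in> W"
  using simple_graph_subset[of W F "{x, y}"] by simp

lemma simple_graph_restrict:
  "simple_graph W F \<Longrightarrow> A \<subseteq> W \<Longrightarrow> F' \<subseteq> {e\<in>F. e \<subseteq> A} \<Longrightarrow> simple_graph A F'"
  unfolding simple_graph_def
  by (auto intro: finite_subset) (metis (no_types, lifting) insert_subset subsetD mem_Collect_eq)

lemma simple_graph_mono: "simple_graph W F \<Longrightarrow> F' \<subseteq> F \<Longrightarrow> simple_graph W F'"
  unfolding simple_graph_def by blast

lemma reach_class_subset:
  assumes "simple_graph W F" "u \<in> W"
  shows "{z. reach F u z} \<subseteq> W"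
proof
  fix z assume "z \<in> {z. reach F u z}"
  then have "reach F u z" by simp
  then show "z \<in> W"
    by (rule reach_invariant) (use assms(2) simple_graph_edge[OF assms(1)] in auto)
qed

lemma reach_classes_disjoint: "\<not> reach F u v \<Longrightarrow> {z. reach F u z} \<inter> {z. reach F v z} = {}"
proof (rule ccontr)
  assume apart: "\<not> reach F u v" and "{z. reach F u z} \<inter> {z. reach F v z} \<noteq> {}"
  then obtain z where z: "reach F u z" "reach F v z" by blast
  show False using apart rtrancl_trans[OF z(1) reach_sym[OF z(2)]] by simp
qed

lemma reach_within_class: "reach F u z \<Longrightarrow> reach {e\<in>F. e \<subseteq> {y. reach F u y}} u z"
  by (rule reach_restrict) (simp_all add: reach_step[where F = F and x = u])

lemma terminal_classes:
  assumes F: "simple_graph W F" and uv: "u \<in> W" "v \<in> W"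
    and attached: "\<forall>z\<in>W. reach F z u \<or> reach F z v" and apart: "\<not> reach F u v"
  defines "A \<equiv> {z. reach F u z}" and "B \<equiv> {z. reach F v z}"
  shows "W = A \<union> B" "A \<inter> B = {}" "\<forall>e\<in>F. e \<subseteq> A \<or> e \<subseteq> B"
proof -
  have "W \<subseteq> A \<union> B"
  proof
    fix z assume "z \<in> W"
    then have "reach F z u \<or> reach F z v" using attached by blast
    then show "z \<in> A \<union> B" unfolding A_def B_def by (auto dest: reach_sym)
  qed
  moreover have "A \<union> B \<subseteq> W"
    unfolding A_def B_def using reach_class_subset[OF F uv(1)] reach_class_subset[OF F uv(2)] by (rule Un_least)
  ultimately show "W = A \<union> B" by (rule equalityI)
  show disjoint: "A \<inter> B = {}"
  proof (rule ccontr)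
    assume "A \<inter> B \<noteq> {}"
    then obtain z where z: "reach F u z" "reach F v z" unfolding A_def B_def by blast
    show False using apart rtrancl_trans[OF z(1) reach_sym[OF z(2)]] by simp
  qed
  show "\<forall>e\<in>F. e \<subseteq> A \<or> e \<subseteq> B"
  proof
    fix e assume "e \<in> F"
    then obtain x y where e: "e = {x, y}" "x \<in> W" using F unfolding simple_graph_def by blast
    have "{x, y} \<in> F" using \<open>e \<in> F\<close> e(1) by simp
    then have "x \<in> A \<Longrightarrow> y \<in> A" "x \<in> B \<Longrightarrow> y \<in> B"
      unfolding A_def B_def by (simp_all add: reach_step)
    moreover have "x \<in> A \<union> B" using e(2) \<open>W = A \<union> B\<close> by simp
    ultimately show "e \<subseteq> A \<or> e \<subseteq> B" using e(1) by blast
  qed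
qed

section \<open>2-edge-connected components\<close>

lemma has_2ec_subgraph_onI:
  assumes "F' \<subseteq> F" "\<forall>e\<in>F'. e \<subseteq> X" "two_edge_connected X F'" "X \<subseteq> W" "X \<noteq> {}"
  shows "has_2ec_subgraph_on W F X"
  unfolding has_2ec_subgraph_on_def using assms by (intro conjI exI[of _ F']) simp_all

lemma has_2ec_subgraph_onE:
  assumes "has_2ec_subgraph_on W F X"
  obtains F' where "F' \<subseteq> F" "\<forall>e\<in>F'. e \<subseteq> X" "two_edge_connected X F'" "X \<subseteq> W" "X \<noteq> {}"
  using assms unfolding has_2ec_subgraph_on_def by blast

lemma has_2ec_subgraph_on_mono:
  "has_2ec_subgraph_on W F X \<Longrightarrow> W \<subseteq> W' \<Longrightarrow> F \<subseteq> F' \<Longrightarrow> has_2ec_subgraph_on W' F' X"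
  unfolding has_2ec_subgraph_on_def by (meson order_trans)

lemma has_2ec_subgraph_on_singleton: "x \<in> W \<Longrightarrow> has_2ec_subgraph_on W F {x}"
  by (rule has_2ec_subgraph_onI[of "{}"]) (auto simp: two_edge_connected_def gconnected_def)

lemma has_2ec_subgraph_on_Un:
  assumes "has_2ec_subgraph_on W F X" "has_2ec_subgraph_on W F Y" "c \<in> X" "c \<in> Y"
  shows "has_2ec_subgraph_on W F (X \<union> Y)"
proof -
  obtain FX where FX: "FX \<subseteq> F" "\<forall>e\<in>FX. e \<subseteq> X" "two_edge_connected X FX" "X \<subseteq> W"
    using assms(1) by (rule has_2ec_subgraph_onE)
  obtain FY where FY: "FY \<subseteq> F" "\<forall>e\<in>FY. e \<subseteq> Y" "two_edge_connected Y FY" "Y \<subseteq> W"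
    using assms(2) by (rule has_2ec_subgraph_onE)
  have "gconnected (X \<union> Y) (FX \<union> FY - {e})" for e
  proof (rule gconnectedI_hub[where c = c])
    fix z assume "z \<in> X \<union> Y"
    then have "reach (FX - {e}) z c \<or> reach (FY - {e}) z c"
      using two_edge_connected_minus[OF FX(3)] two_edge_connected_minus[OF FY(3)] assms(3,4)
      unfolding gconnected_def by blast
    then show "reach (FX \<union> FY - {e}) z c" by (elim disjE) (erule reach_mono; blast)+
  qed
  moreover from this[of "{}"] have "gconnected (X \<union> Y) (FX \<union> FY)"
    by (rule gconnected_mono) blast
  ultimately have "two_edge_connected (X \<union> Y) (FX \<union> FY)"
    unfolding two_edge_connected_def by blast
  then show ?thesis
    using FX FY assms(3) by (intro has_2ec_subgraph_onI[of "FX \<union> FY"]) auto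
qed

lemma has_2ec_subgraph_on_subset: "has_2ec_subgraph_on W F X \<Longrightarrow> X \<subseteq> W \<and> X \<noteq> {}"
  unfolding has_2ec_subgraph_on_def by blast

lemma comps_subset: "X \<in> comps W F \<Longrightarrow> X \<subseteq> W \<and> X \<noteq> {}"
  unfolding comps_def is_2ec_comp_def by (auto dest: has_2ec_subgraph_on_subset)

lemma comps_eq_if_common:
  assumes "X \<in> comps W F" "Y \<in> comps W F" "x \<in> X" "x \<in> Y"
  shows "X = Y"
proof -
  have "has_2ec_subgraph_on W F (X \<union> Y)"
    using assms has_2ec_subgraph_on_Un[of W F X Y x] by (simp add: comps_def is_2ec_comp_def)
  then have "\<not> X \<subset> X \<union> Y" "\<not> Y \<subset> X \<union> Y"
    using assms(1,2) by (auto simp: comps_def is_2ec_comp_def)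
  then show ?thesis by blast
qed

lemma ex_comps:
  assumes "finite W" "x \<in> W"
  shows "\<exists>X\<in>comps W F. x \<in> X"
proof -
  let ?Q = "{Y. has_2ec_subgraph_on W F Y \<and> x \<in> Y}"
  have "finite ?Q"
    using assms(1) has_2ec_subgraph_on_subset by (intro finite_subset[of ?Q "Pow W"]) auto
  moreover have "{x} \<in> ?Q" using has_2ec_subgraph_on_singleton[OF assms(2)] by simp
  ultimately obtain X where X: "X \<in> ?Q" "\<forall>Y\<in>?Q. X \<subseteq> Y \<longrightarrow> X = Y"
    using finite_has_maximal[of ?Q] by blast
  have "\<not> has_2ec_subgraph_on W F Y" if "X \<subset> Y" for Y
    using X that by blast
  then have "is_2ec_comp W F X" unfolding is_2ec_comp_def using X(1) by blast
  then show ?thesis using X(1) unfolding comps_def by blast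
qed

lemma comp_of_eq: "X \<in> comps W F \<Longrightarrow> x \<in> X \<Longrightarrow> comp_of W F x = X"
  unfolding comp_of_def by (rule the_equality) (simp, metis comps_eq_if_common)

lemma comp_of_in_comps:
  assumes "finite W" "x \<in> W"
  shows "comp_of W F x \<in> comps W F" "x \<in> comp_of W F x"
proof -
  obtain X where "X \<in> comps W F" "x \<in> X" using ex_comps[OF assms] by blast
  moreover from this have "comp_of W F x = X" by (rule comp_of_eq)
  ultimately show "comp_of W F x \<in> comps W F" "x \<in> comp_of W F x" by simp_all
qed

lemma comps_two_edge_connected:
  assumes "two_edge_connected W F" "\<forall>e\<in>F. e \<subseteq> W" "W \<noteq> {}"
  shows "comps W F = {W}"
proof -
  have W: "has_2ec_subgraph_on W F W" using assms by (intro has_2ec_subgraph_onI[of F]) auto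
  have "is_2ec_comp W F X \<longleftrightarrow> X = W" for X
  proof
    assume "is_2ec_comp W F X"
    then have "X \<subseteq> W" "\<not> X \<subset> W"
      using W has_2ec_subgraph_on_subset unfolding is_2ec_comp_def by blast+
    then show "X = W" by blast
  next
    assume "X = W"
    then show "is_2ec_comp W F X"
      using W has_2ec_subgraph_on_subset unfolding is_2ec_comp_def by blast
  qed
  then show ?thesis unfolding comps_def by blast
qed

lemma type_A_if_two_edge_connected:
  assumes "two_edge_connected W F" "\<forall>e\<in>F. e \<subseteq> W" "u \<in> W" "v \<in> W"
  shows "type_A W F u v"
proof -
  have W: "comps W F = {W}" using comps_two_edge_connected assms by blast
  moreover have "comp_of W F u = W" "comp_of W F v = W"
    using comp_of_eq[of W W F] W assms(3,4) by simp_all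
  moreover have "comp_edges W F = {}" using W unfolding comp_edges_def by blast
  ultimately show ?thesis unfolding type_A_def by simp
qed

lemma type_A_reach_minus:
  assumes "type_A W F u v" "finite W" "u \<in> W" "v \<in> W"
  shows "reach (F - {e}) u v"
proof -
  let ?X = "comp_of W F u"
  have X: "?X \<in> comps W F" "u \<in> ?X" using comp_of_in_comps[OF assms(2,3)] .
  have "comp_of W F v = ?X" using assms(1) unfolding type_A_def by simp
  then have "v \<in> ?X" using comp_of_in_comps(2)[OF assms(2,4), of F] by simp
  have "has_2ec_subgraph_on W F ?X" using X(1) unfolding comps_def is_2ec_comp_def by simp
  then obtain F' where F': "F' \<subseteq> F" "\<forall>e\<in>F'. e \<subseteq> ?X" "two_edge_connected ?X F'"
    by (rule has_2ec_subgraph_onE)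
  have "reach (F' - {e}) u v"
    using two_edge_connected_minus[OF F'(3), of e] X(2) \<open>v \<in> ?X\<close> unfolding gconnected_def by blast
  then show ?thesis by (rule reach_mono) (use F'(1) in blast)
qed

section \<open>Splitting along a bridge\<close>

lemma gconnected_side:
  assumes "gconnected X F" "X \<subseteq> A \<union> B" "A \<inter> B = {}" "\<forall>e\<in>F. e \<subseteq> A \<or> e \<subseteq> B"
  shows "X \<subseteq> A \<or> X \<subseteq> B"
proof (cases "X = {}")
  case False
  then obtain x where x: "x \<in> X" by blast
  have closed: "b \<in> S" if "S \<in> {A, B}" "{a, b} \<in> F" "a \<in> S" for S a b
  proof -
    have "{a, b} \<subseteq> A \<or> {a, b} \<subseteq> B" using assms(4) that(2) by blast
    then show ?thesis using that(1,3) assms(3) by auto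
  qed
  have "X \<subseteq> S" if "S \<in> {A, B}" "x \<in> S" for S
  proof
    fix y assume "y \<in> X"
    then have "reach F x y" using assms(1) x unfolding gconnected_def by blast
    then show "y \<in> S" using that closed by (blast intro: reach_invariant)
  qed
  then show ?thesis using x assms(2) by blast
qed simp

lemma has_2ec_subgraph_on_split:
  assumes "W = A \<union> B" "A \<inter> B = {}" "\<forall>e'\<in>F - {e}. e' \<subseteq> A \<or> e' \<subseteq> B"
  shows "has_2ec_subgraph_on W F X \<longleftrightarrow>
    has_2ec_subgraph_on A {e\<in>F. e \<subseteq> A} X \<or> has_2ec_subgraph_on B {e\<in>F. e \<subseteq> B} X"
proof
  assume "has_2ec_subgraph_on W F X"
  then obtain F' where F': "F' \<subseteq> F" "\<forall>e\<in>F'. e \<subseteq> X" "two_edge_connected X F'" "X \<subseteq> W" "X \<noteq> {}"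
    by (rule has_2ec_subgraph_onE)
  have "\<forall>e'\<in>F' - {e}. e' \<subseteq> A \<or> e' \<subseteq> B" using F'(1) assms(3) by blast
  with F'(4) have "X \<subseteq> A \<or> X \<subseteq> B"
    using gconnected_side[OF two_edge_connected_minus[OF F'(3)] _ assms(2)] assms(1) by simp
  moreover have restrict: "has_2ec_subgraph_on S {e\<in>F. e \<subseteq> S} X" if "X \<subseteq> S" for S
    using F' that by (intro has_2ec_subgraph_onI[of F']) (auto, blast)
  ultimately show "has_2ec_subgraph_on A {e\<in>F. e \<subseteq> A} X \<or> has_2ec_subgraph_on B {e\<in>F. e \<subseteq> B} X"
    by (elim disjE) (simp_all add: restrict)
next
  assume "has_2ec_subgraph_on A {e\<in>F. e \<subseteq> A} X \<or> has_2ec_subgraph_on B {e\<in>F. e \<subseteq> B} X"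
  then show "has_2ec_subgraph_on W F X"
    by (elim disjE) (erule has_2ec_subgraph_on_mono; use assms(1) in blast)+
qed

lemma is_2ec_comp_split_left:
  assumes "W = A \<union> B" "A \<inter> B = {}" "\<forall>e'\<in>F - {e}. e' \<subseteq> A \<or> e' \<subseteq> B"
  shows "is_2ec_comp W F X \<and> X \<subseteq> A \<longleftrightarrow> is_2ec_comp A {e\<in>F. e \<subseteq> A} X"
proof -
  note split = has_2ec_subgraph_on_split[OF assms]
  have not_B: "\<not> has_2ec_subgraph_on B {e\<in>F. e \<subseteq> B} Y"
    if "X \<subseteq> Y" "X \<subseteq> A" "X \<noteq> {}" for Y
    using that assms(2) has_2ec_subgraph_on_subset[of B _ Y] by blast
  show ?thesis
  proof
    assume X: "is_2ec_comp W F X \<and> X \<subseteq> A"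
    then have "has_2ec_subgraph_on W F X" unfolding is_2ec_comp_def by simp
    then have "has_2ec_subgraph_on A {e\<in>F. e \<subseteq> A} X"
      using split not_B[of X] X has_2ec_subgraph_on_subset[of W F X] by blast
    moreover have "\<not> has_2ec_subgraph_on A {e\<in>F. e \<subseteq> A} Y" if "X \<subset> Y" for Y
      using X that split unfolding is_2ec_comp_def by blast
    ultimately show "is_2ec_comp A {e\<in>F. e \<subseteq> A} X" unfolding is_2ec_comp_def by blast
  next
    assume X: "is_2ec_comp A {e\<in>F. e \<subseteq> A} X"
    then have hX: "has_2ec_subgraph_on A {e\<in>F. e \<subseteq> A} X" unfolding is_2ec_comp_def by simp
    then have XA: "X \<subseteq> A" "X \<noteq> {}" using has_2ec_subgraph_on_subset by blast+
    have "\<not> has_2ec_subgraph_on W F Y" if "X \<subset> Y" for Y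
      using X that split not_B[of Y] XA unfolding is_2ec_comp_def by blast
    then show "is_2ec_comp W F X \<and> X \<subseteq> A" using hX split XA unfolding is_2ec_comp_def by blast
  qed
qed

lemma comps_split:
  assumes "W = A \<union> B" "A \<inter> B = {}" "\<forall>e'\<in>F - {e}. e' \<subseteq> A \<or> e' \<subseteq> B"
  shows "comps W F = comps A {e\<in>F. e \<subseteq> A} \<union> comps B {e\<in>F. e \<subseteq> B}"
proof -
  have "W = B \<union> A" "B \<inter> A = {}" using assms(1,2) by (simp_all add: Un_commute Int_commute)
  moreover have "\<forall>e'\<in>F - {e}. e' \<subseteq> B \<or> e' \<subseteq> A" using assms(3) by blast
  ultimately have right: "is_2ec_comp W F X \<and> X \<subseteq> B \<longleftrightarrow> is_2ec_comp B {e\<in>F. e \<subseteq> B} X" for X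
    by (rule is_2ec_comp_split_left)
  note left = is_2ec_comp_split_left[OF assms]
  have "X \<subseteq> A \<or> X \<subseteq> B" if "is_2ec_comp W F X" for X
  proof -
    have "has_2ec_subgraph_on A {e\<in>F. e \<subseteq> A} X \<or> has_2ec_subgraph_on B {e\<in>F. e \<subseteq> B} X"
      using that has_2ec_subgraph_on_split[OF assms] unfolding is_2ec_comp_def by simp
    then show ?thesis using has_2ec_subgraph_on_subset by blast
  qed
  then show ?thesis unfolding comps_def using left right by blast
qed

lemma comp_of_split:
  assumes "comps W F = comps A FA \<union> comps B FB" "finite A" "x \<in> A"
  shows "comp_of W F x = comp_of A FA x"
  using comp_of_in_comps[OF assms(2,3)] assms(1) by (intro comp_of_eq) auto

lemma comp_edges_eq:
  assumes "finite W" "\<forall>e\<in>F. e \<subseteq> W"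
  shows "comp_edges W F =
    {{comp_of W F x, comp_of W F y} | x y. {x, y} \<in> F \<and> comp_of W F x \<noteq> comp_of W F y}"
    (is "_ = ?R")
proof
  show "comp_edges W F \<subseteq> ?R"
  proof
    fix p assume "p \<in> comp_edges W F"
    then obtain X Y x y where p: "p = {X, Y}" "X \<in> comps W F" "Y \<in> comps W F" "X \<noteq> Y"
      "x \<in> X" "y \<in> Y" "{x, y} \<in> F"
      unfolding comp_edges_def by blast
    have "comp_of W F x = X" "comp_of W F y = Y"
      using comp_of_eq[OF p(2,5)] comp_of_eq[OF p(3,6)] .
    with p show "p \<in> ?R" by blast
  qed
next
  show "?R \<subseteq> comp_edges W F"
  proof
    fix p assume "p \<in> ?R"
    then obtain x y where p: "p = {comp_of W F x, comp_of W F y}" "{x, y} \<in> F"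
      "comp_of W F x \<noteq> comp_of W F y"
      by blast
    then have "{x, y} \<subseteq> W" using assms(2) by blast
    then have "comp_of W F x \<in> comps W F" "x \<in> comp_of W F x"
      "comp_of W F y \<in> comps W F" "y \<in> comp_of W F y"
      using comp_of_in_comps[OF assms(1)] by auto
    with p show "p \<in> comp_edges W F" unfolding comp_edges_def
      by (intro CollectI exI[of _ "comp_of W F x"] exI[of _ "comp_of W F y"]) blast
  qed
qed

lemma comp_edges_side:
  assumes "finite S" "\<And>x. x \<in> S \<Longrightarrow> comp_of S {e\<in>F. e \<subseteq> S} x = comp_of W F x"
  shows "comp_edges S {e\<in>F. e \<subseteq> S} =
    {{comp_of W F x, comp_of W F y} | x y. {x, y} \<in> F \<and> {x, y} \<subseteq> S \<and> comp_of W F x \<noteq> comp_of W F y}"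
proof -
  have "\<forall>e\<in>{e\<in>F. e \<subseteq> S}. e \<subseteq> S" by blast
  note eq = comp_edges_eq[OF assms(1) this]
  let ?cS = "comp_of S {e\<in>F. e \<subseteq> S}" and ?cW = "comp_of W F"
  have "(p = {?cS x, ?cS y} \<and> {x, y} \<in> {e\<in>F. e \<subseteq> S} \<and> ?cS x \<noteq> ?cS y) \<longleftrightarrow>
      (p = {?cW x, ?cW y} \<and> {x, y} \<in> F \<and> {x, y} \<subseteq> S \<and> ?cW x \<noteq> ?cW y)" for p x y
  proof (cases "{x, y} \<subseteq> S")
    case True
    then have "?cS x = ?cW x" "?cS y = ?cW y" using assms(2) by simp_all
    with True show ?thesis by simp
  qed auto
  then show ?thesis unfolding eq by simp
qed

lemma comp_edges_split:
  assumes W: "W = A \<union> B" "A \<inter> B = {}" "finite W" "\<forall>e\<in>F. e \<subseteq> W"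
    and split: "\<forall>e'\<in>F - {{a, b}}. e' \<subseteq> A \<or> e' \<subseteq> B"
    and ab: "{a, b} \<in> F" "a \<in> A" "b \<in> B"
  defines "FA \<equiv> {e\<in>F. e \<subseteq> A}" and "FB \<equiv> {e\<in>F. e \<subseteq> B}"
  shows "comp_edges W F = comp_edges A FA \<union> comp_edges B FB \<union> {{comp_of A FA a, comp_of B FB b}}"
proof -
  let ?c = "comp_of W F"
  have fin: "finite A" "finite B" using W(1,3) by simp_all
  have cs: "comps W F = comps A FA \<union> comps B FB"
    unfolding FA_def FB_def by (rule comps_split[OF W(1,2) split])
  then have "comps W F = comps B FB \<union> comps A FA" by blast
  note on_A = comp_of_split[OF cs fin(1)] and on_B = comp_of_split[OF this fin(2)]
  have "comp_of A FA a \<subseteq> A" using comps_subset[OF comp_of_in_comps(1)[OF fin(1) ab(2)]] by blast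
  moreover have "b \<in> ?c b" using comp_of_in_comps(2)[OF W(3)] ab(3) W(1) by simp
  ultimately have ab_apart: "?c a \<noteq> ?c b" using on_A[OF ab(2)] ab(3) W(2) by auto
  have sides: "comp_edges S {e\<in>F. e \<subseteq> S} =
      {{?c x, ?c y} | x y. {x, y} \<in> F \<and> {x, y} \<subseteq> S \<and> ?c x \<noteq> ?c y}" if "S \<in> {A, B}" for S
    using that fin on_A on_B by (intro comp_edges_side) (auto simp: FA_def FB_def)
  have "comp_edges W F = {{?c x, ?c y} | x y. {x, y} \<in> F \<and> ?c x \<noteq> ?c y}"
    by (rule comp_edges_eq[OF W(3,4)])
  also have "\<dots> = {{?c x, ?c y} | x y. {x, y} \<in> F \<and> {x, y} \<subseteq> A \<and> ?c x \<noteq> ?c y}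
      \<union> {{?c x, ?c y} | x y. {x, y} \<in> F \<and> {x, y} \<subseteq> B \<and> ?c x \<noteq> ?c y} \<union> {{?c a, ?c b}}"
    (is "?R = ?RA \<union> ?RB \<union> _")
  proof (intro equalityI subsetI)
    fix p assume "p \<in> ?R"
    then obtain x y where p: "p = {?c x, ?c y}" "{x, y} \<in> F" "?c x \<noteq> ?c y" by blast
    then consider "{x, y} = {a, b}" | "{x, y} \<subseteq> A" | "{x, y} \<subseteq> B" using split by blast
    then show "p \<in> ?RA \<union> ?RB \<union> {{?c a, ?c b}}"
    proof cases
      case 1
      then have "p = {?c a, ?c b}" using p(1) by (auto simp: doubleton_eq_iff)
      then show ?thesis by blast
    qed (use p in blast)+
  next
    fix p assume "p \<in> ?RA \<union> ?RB \<union> {{?c a, ?c b}}"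
    then show "p \<in> ?R" using ab(1) ab_apart by blast
  qed
  finally show ?thesis
    using sides[of A, folded FA_def] sides[of B, folded FB_def] on_A[OF ab(2)] on_B[OF ab(3)] by simp
qed

section \<open>Chains of components\<close>

definition path_edges :: "'b list \<Rightarrow> 'b set set" where
  "path_edges ps = (\<lambda>i. {ps ! i, ps ! Suc i}) ` {i. Suc i < length ps}"

lemma path_edges_singleton: "path_edges [x] = {}"
  unfolding path_edges_def by simp

lemma path_edges_append:
  assumes "xs \<noteq> []" "ys \<noteq> []"
  shows "path_edges (xs @ ys) = path_edges xs \<union> path_edges ys \<union> {{last xs, hd ys}}"
proof -
  let ?n = "length xs" and ?zs = "xs @ ys"
  have "{i. Suc i < length ?zs} = {i. Suc i < ?n} \<union> (\<lambda>j. ?n + j) ` {j. Suc j < length ys} \<union> {?n - 1}"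
  proof (intro equalityI subsetI)
    fix i assume i: "i \<in> {i. Suc i < length ?zs}"
    consider "Suc i < ?n" | "Suc i = ?n" | "?n \<le> i" by linarith
    then show "i \<in> {i. Suc i < ?n} \<union> (\<lambda>j. ?n + j) ` {j. Suc j < length ys} \<union> {?n - 1}"
    proof cases
      case 3
      then have "i = ?n + (i - ?n)" "Suc (i - ?n) < length ys" using i by auto
      then show ?thesis by blast
    qed auto
  qed (use assms in auto)
  moreover have "?zs ! (?n - 1) = last xs" "?zs ! Suc (?n - 1) = hd ys"
    using assms by (simp_all add: nth_append last_conv_nth hd_conv_nth)
  ultimately show ?thesis
    unfolding path_edges_def by (auto simp: nth_append image_Un image_image)
qed

text \<open>Type A or B, in a form that can be glued along a bridge.\<close>

definition comp_path :: "'a set \<Rightarrow> 'a set set \<Rightarrow> 'a \<Rightarrow> 'a \<Rightarrow> bool" where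
  "comp_path W F u v \<longleftrightarrow> (\<exists>ps. distinct ps \<and> ps \<noteq> [] \<and>
     hd ps = comp_of W F u \<and> last ps = comp_of W F v \<and>
     set ps = comps W F \<and> comp_edges W F = path_edges ps)"

lemma comp_path_if_type_A: "type_A W F u v \<Longrightarrow> comp_path W F u v"
  unfolding type_A_def comp_path_def
  by (intro exI[of _ "[comp_of W F u]"]) (simp add: path_edges_singleton)

lemma comp_path_types:
  assumes "comp_path W F u v"
  shows "(type_A W F u v \<or> type_B W F u v) \<and> \<not> type_C W F u v"
proof -
  obtain ps where ps: "distinct ps" "ps \<noteq> []" "hd ps = comp_of W F u" "last ps = comp_of W F v"
    "set ps = comps W F" "comp_edges W F = path_edges ps"
    using assms unfolding comp_path_def by blast
  obtain X ps' where X: "ps = X # ps'" using ps(2) by (cases ps) auto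
  show ?thesis
  proof (cases ps')
    case Nil
    then have "type_A W F u v" unfolding type_A_def using ps X by (simp add: path_edges_singleton)
    moreover have "\<not> type_C W F u v" unfolding type_C_def using ps X Nil by simp
    ultimately show ?thesis by blast
  next
    case (Cons Y ps'')
    then have "2 \<le> length ps" using X by simp
    then have "type_B W F u v"
      unfolding type_B_def using ps by (intro exI[of _ ps]) (auto simp: path_edges_def)
    moreover have "{X, Y} \<in> comp_edges W F" unfolding ps(6) path_edges_def X Cons by force
    then have "\<not> type_C W F u v" unfolding type_C_def by blast
    ultimately show ?thesis by blast
  qed
qed

lemma comp_path_join:
  assumes W: "W = A \<union> B" "A \<inter> B = {}" "finite W" "\<forall>e\<in>F. e \<subseteq> W"
    and split: "\<forall>e'\<in>F - {{a, b}}. e' \<subseteq> A \<or> e' \<subseteq> B"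
    and ab: "{a, b} \<in> F" "a \<in> A" "b \<in> B" and uv: "u \<in> A" "v \<in> B"
    and paths: "comp_path A {e\<in>F. e \<subseteq> A} u a" "comp_path B {e\<in>F. e \<subseteq> B} b v"
  shows "comp_path W F u v"
proof -
  let ?FA = "{e\<in>F. e \<subseteq> A}" and ?FB = "{e\<in>F. e \<subseteq> B}"
  obtain xs where xs: "distinct xs" "xs \<noteq> []" "hd xs = comp_of A ?FA u" "last xs = comp_of A ?FA a"
      "set xs = comps A ?FA" "comp_edges A ?FA = path_edges xs"
    using paths(1) unfolding comp_path_def by blast
  obtain ys where ys: "distinct ys" "ys \<noteq> []" "hd ys = comp_of B ?FB b" "last ys = comp_of B ?FB v"
      "set ys = comps B ?FB" "comp_edges B ?FB = path_edges ys"
    using paths(2) unfolding comp_path_def by blast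
  have fin: "finite A" "finite B" using W(1,3) by simp_all
  have cs: "comps W F = comps A ?FA \<union> comps B ?FB" by (rule comps_split[OF W(1,2) split])
  then have "comps W F = comps B ?FB \<union> comps A ?FA" by blast
  note on_A = comp_of_split[OF cs fin(1)] and on_B = comp_of_split[OF this fin(2)]
  have "X \<notin> comps B ?FB" if "X \<in> comps A ?FA" for X
    using comps_subset[OF that] comps_subset[of X B ?FB] W(2) by blast
  then have "set xs \<inter> set ys = {}" unfolding xs(5) ys(5) by blast
  then show ?thesis unfolding comp_path_def
    using xs ys cs on_A[OF uv(1)] on_B[OF uv(2)] comp_edges_split[OF W split ab]
    by (intro exI[of _ "xs @ ys"]) (simp add: path_edges_append)
qed

definition bridges_separate :: "'a set \<Rightarrow> 'a set set \<Rightarrow> 'a \<Rightarrow> 'a \<Rightarrow> bool" where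
  "bridges_separate W F u v \<longleftrightarrow> (\<forall>e\<in>F. reach (F - {e}) u v \<longrightarrow> gconnected W (F - {e}))"

lemma bridges_separate_commute: "bridges_separate W F u v \<Longrightarrow> bridges_separate W F v u"
  unfolding bridges_separate_def by (metis reach_sym)

lemma bridge_endpoints:
  assumes F: "simple_graph W F" "gconnected W F" and e: "e \<in> F" "\<not> reach (F - {e}) u v"
    and uv: "u \<in> W" "v \<in> W"
  obtains a b where "e = {a, b}" "reach (F - {e}) u a" "reach (F - {e}) v b"
proof -
  obtain x y where xy: "e = {x, y}" "x \<in> W" using F(1) e(1) unfolding simple_graph_def by blast
  have not_both: "\<not> (reach (F - {e}) u z \<and> reach (F - {e}) v z)" for z
    using e(2) rtrancl_trans[OF _ reach_sym] by metis
  have "reach (F - {e}) u x \<or> reach (F - {e}) u y" "reach (F - {e}) v x \<or> reach (F - {e}) v y"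
    using reach_endpoint_minus_edge[OF F(2) xy(2), of u y] reach_endpoint_minus_edge[OF F(2) xy(2), of v y]
      uv xy(1) by (auto dest: reach_sym)
  then consider "reach (F - {e}) u x" "reach (F - {e}) v y" | "reach (F - {e}) u y" "reach (F - {e}) v x"
    using not_both by blast
  then show thesis
  proof cases
    case 1
    then show thesis using that xy(1) by blast
  next
    case 2
    moreover have "e = {y, x}" using xy(1) by (simp add: insert_commute)
    ultimately show thesis using that by blast
  qed
qed

lemma bridge_side:
  assumes F: "simple_graph W F" "bridges_separate W F u v" and ab: "{a, b} \<in> F" and u: "u \<in> W"
    and ua: "reach (F - {{a, b}}) u a" and vb: "reach (F - {{a, b}}) v b"
    and apart: "\<not> reach (F - {{a, b}}) u v"
  defines "A \<equiv> {z. reach (F - {{a, b}}) u z}"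
  shows "gconnected A {e\<in>F. e \<subseteq> A}" "bridges_separate A {e\<in>F. e \<subseteq> A} u a"
proof -
  let ?E0 = "F - {{a, b}}" and ?FA = "{e\<in>F. e \<subseteq> A}"
  define B where "B = {z. reach ?E0 v z}"
  have disjoint: "A \<inter> B = {}" unfolding A_def B_def by (rule reach_classes_disjoint[OF apart])
  then have bA: "b \<notin> A" using vb unfolding B_def by blast
  have AW: "A \<subseteq> W" unfolding A_def by (rule reach_class_subset[OF simple_graph_mono[OF F(1)] u]) blast
  have closed_A: "y \<in> A" if "{x, y} \<in> ?E0" "x \<in> A" for x y
    using that reach_step[where F = ?E0 and x = u] unfolding A_def by simp
  have "reach ?FA z u" if "z \<in> A" for z
  proof -
    have "reach ?E0 u z" using that unfolding A_def by simp
    then have "reach {e\<in>?E0. e \<subseteq> A} u z" unfolding A_def by (rule reach_within_class)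
    then have "reach ?FA u z" by (rule reach_mono) blast
    then show ?thesis by (rule reach_sym)
  qed
  then show "gconnected A ?FA" by (rule gconnectedI_hub)
  show "bridges_separate A ?FA u a" unfolding bridges_separate_def
  proof (intro ballI impI)
    fix e assume e: "e \<in> ?FA" and ua': "reach (?FA - {e}) u a"
    have "e \<noteq> {a, b}" using e bA by blast
    have "e \<noteq> {}" using F(1) e unfolding simple_graph_def by auto
    have "reach {e'\<in>?E0. e' \<subseteq> B} v b" using reach_within_class[OF vb] unfolding B_def .
    then have "reach (F - {e}) v b" by (rule reach_mono) (use e disjoint \<open>e \<noteq> {}\<close> in blast)
    moreover have "reach (F - {e}) a b" using ab \<open>e \<noteq> {a, b}\<close> by (intro reach_edge) simp
    moreover have "reach (F - {e}) u a" using ua' by (rule reach_mono) blast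
    ultimately have "reach (F - {e}) u v" by (meson reach_sym rtrancl_trans)
    then have conn: "gconnected W (F - {e})" using F(2) e unfolding bridges_separate_def by blast
    show "gconnected A (?FA - {e})"
    proof (rule gconnectedI_hub)
      fix z assume z: "z \<in> A"
      have "\<not> reach (F - {e} - {{a, b}}) z b"
      proof
        assume "reach (F - {e} - {{a, b}}) z b"
        then have "reach ?E0 z b" by (rule reach_mono) blast
        moreover have "reach ?E0 u z" using z unfolding A_def by simp
        ultimately show False using bA rtrancl_trans unfolding A_def by fastforce
      qed
      moreover have "a \<in> W" using AW ua unfolding A_def by blast
      ultimately have "reach (F - {e} - {{a, b}}) z a"
        using reach_endpoint_minus_edge[OF conn _ subsetD[OF AW z]] by blast
      then have "reach {e'\<in>F - {e} - {{a, b}}. e' \<subseteq> A} z a"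
        by (rule reach_restrict[OF _ z]) (use closed_A in blast)
      then have "reach (?FA - {e}) z a" by (rule reach_mono) blast
      then show "reach (?FA - {e}) z u" using reach_sym[OF ua'] by (rule rtrancl_trans)
    qed
  qed
qed

lemma bridge_split:
  assumes F: "simple_graph W F" "gconnected W F" and uv: "u \<in> W" "v \<in> W"
    and ab: "{a, b} \<in> F" "reach (F - {{a, b}}) u a" "reach (F - {{a, b}}) v b"
    and apart: "\<not> reach (F - {{a, b}}) u v"
  defines "A \<equiv> {z. reach (F - {{a, b}}) u z}" and "B \<equiv> {z. reach (F - {{a, b}}) v z}"
  shows "W = A \<union> B" "A \<inter> B = {}" "\<forall>e'\<in>F - {{a, b}}. e' \<subseteq> A \<or> e' \<subseteq> B"
proof -
  have "reach (F - {{a, b}}) z u \<or> reach (F - {{a, b}}) z v" if "z \<in> W" for z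
  proof -
    have "a \<in> W" using simple_graph_edge[OF F(1) ab(1)] by blast
    then have "reach (F - {{a, b}}) z a \<or> reach (F - {{a, b}}) z b"
      using reach_endpoint_minus_edge[OF F(2) _ that] by blast
    then show ?thesis using rtrancl_trans[OF _ reach_sym[OF ab(2)]] rtrancl_trans[OF _ reach_sym[OF ab(3)]]
      by blast
  qed
  then show "W = A \<union> B" "A \<inter> B = {}" "\<forall>e'\<in>F - {{a, b}}. e' \<subseteq> A \<or> e' \<subseteq> B"
    using terminal_classes[OF simple_graph_mono[OF F(1)] uv _ apart] unfolding A_def B_def by blast+
qed

lemma comp_path_if_bridges_separate:
  assumes "simple_graph W F" "u \<in> W" "v \<in> W" "gconnected W F" "bridges_separate W F u v"
  shows "comp_path W F u v"
  using assms
proof (induction "card W" arbitrary: W F u v rule: less_induct)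
  \<comment> \<open>A disconnecting edge {a, b} splits W into the classes of u and v; the two halves,
    with terminals u, a and b, v, again satisfy the hypotheses.\<close>
  case less
  note F = less.prems(1) and uv = less.prems(2,3) and conn = less.prems(4) and bridges = less.prems(5)
  show ?case
  proof (cases "\<forall>e\<in>F. gconnected W (F - {e})")
    case True
    with conn have "two_edge_connected W F" unfolding two_edge_connected_def by blast
    moreover have "\<forall>e\<in>F. e \<subseteq> W" using simple_graph_subset[OF F] by blast
    ultimately show ?thesis using uv by (intro comp_path_if_type_A type_A_if_two_edge_connected)
  next
    case False
    then obtain e where e: "e \<in> F" "\<not> gconnected W (F - {e})" by blast
    then have apart: "\<not> reach (F - {e}) u v" using bridges unfolding bridges_separate_def by blast
    obtain a b where ab: "e = {a, b}" "reach (F - {e}) u a" "reach (F - {e}) v b"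
      using bridge_endpoints[OF F conn e(1) apart uv] .
    have abF: "{a, b} \<in> F" and baF: "{b, a} \<in> F" using e(1) ab(1) by (simp_all add: insert_commute)
    have ba_eq: "{b, a} = {a, b}" by (rule insert_commute)
    have ua: "reach (F - {{a, b}}) u a" and vb: "reach (F - {{a, b}}) v b"
      and apart: "\<not> reach (F - {{a, b}}) u v" "\<not> reach (F - {{a, b}}) v u"
      using ab apart reach_sym_iff[where F = "F - {e}" and x = u and y = v] by simp_all
    define A where "A = {z. reach (F - {{a, b}}) u z}"
    define B where "B = {z. reach (F - {{a, b}}) v z}"
    let ?FA = "{e\<in>F. e \<subseteq> A}" and ?FB = "{e\<in>F. e \<subseteq> B}"
    note classes = bridge_split[OF F conn uv abF ua vb apart(1), folded A_def B_def]
    have in_classes: "u \<in> A" "a \<in> A" "v \<in> B" "b \<in> B" using ua vb unfolding A_def B_def by simp_all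
    have sizes: "card A < card W" "card B < card W"
      using classes(1,2) in_classes F unfolding simple_graph_def by (auto intro!: psubset_card_mono)
    have graphs: "simple_graph A ?FA" "simple_graph B ?FB"
      using simple_graph_restrict[OF F] classes(1) by blast+
    note side_A = bridge_side[OF F bridges abF uv(1) ua vb apart(1), folded A_def]
    note side_B = bridge_side[OF F bridges_separate_commute[OF bridges] baF uv(2),
        unfolded ba_eq, OF vb ua apart(2), folded B_def]
    have "comp_path A ?FA u a"
      using less.hyps[OF sizes(1) graphs(1) in_classes(1,2) side_A] .
    moreover have "comp_path B ?FB b v"
      using less.hyps[OF sizes(2) graphs(2) in_classes(4,3) side_B(1) bridges_separate_commute[OF side_B(2)]] .
    moreover have "finite W" "\<forall>e\<in>F. e \<subseteq> W"
      using F simple_graph_subset[OF F] unfolding simple_graph_def by blast+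
    ultimately show ?thesis
      using comp_path_join[OF classes(1,2) _ _ classes(3) abF] in_classes by blast
  qed
qed

section \<open>Terminals to which every node stays attached\<close>

text \<open>Each side H_i inherits this property from the 2-edge-connected spanning subgraph H,
  and it alone decides between the types.\<close>

definition attached :: "'a set \<Rightarrow> 'a set set \<Rightarrow> 'a \<Rightarrow> 'a \<Rightarrow> bool" where
  "attached W F u v \<longleftrightarrow> (\<forall>e. \<forall>z\<in>W. reach (F - {e}) z u \<or> reach (F - {e}) z v)"

lemma attached_commute: "attached W F u v \<Longrightarrow> attached W F v u"
  unfolding attached_def by blast

lemma attached_reach:
  assumes "attached W F u v" "z \<in> W"
  shows "reach F z u \<or> reach F z v"
proof -
  have "reach (F - {{}}) z u \<or> reach (F - {{}}) z v"
    using assms unfolding attached_def by blast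
  then show ?thesis using reach_diff[where F = F and X = "{{}}"] by blast
qed

lemma comp_path_if_attached:
  assumes "simple_graph W F" "u \<in> W" "v \<in> W" "attached W F u v" "reach F u v"
  shows "comp_path W F u v"
proof (rule comp_path_if_bridges_separate[OF assms(1-3)])
  have "\<forall>z\<in>W. reach F z u \<or> reach F z v" using attached_reach[OF assms(4)] by blast
  then show "gconnected W F" using assms(5) by (rule gconnected_if_reach_terminals)
  show "bridges_separate W F u v" unfolding bridges_separate_def
  proof (intro ballI impI)
    fix e assume "reach (F - {e}) u v"
    moreover have "\<forall>z\<in>W. reach (F - {e}) z u \<or> reach (F - {e}) z v"
      using assms(4) unfolding attached_def by blast
    ultimately show "gconnected W (F - {e})" by (intro gconnected_if_reach_terminals)
  qed
qed

lemma reach_class_two_edge_connected: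
  assumes F: "simple_graph W F" "u \<in> W" and attached: "attached W F u v" and apart: "\<not> reach F u v"
  defines "A \<equiv> {z. reach F u z}"
  shows "two_edge_connected A {e\<in>F. e \<subseteq> A}"
proof -
  have uA: "u \<in> A" unfolding A_def by simp
  have AW: "A \<subseteq> W" unfolding A_def by (rule reach_class_subset[OF F])
  have closed: "y \<in> A" if "{x, y} \<in> F" "x \<in> A" for x y
    using that reach_step[where F = F and x = u] unfolding A_def by simp
  have to_u: "reach ({e\<in>F. e \<subseteq> A} - {e}) z u" if "z \<in> A" for e z
  proof -
    have "\<not> reach (F - {e}) z v"
    proof
      assume "reach (F - {e}) z v"
      then have "reach F z v" by (rule reach_mono) blast
      moreover have "reach F u z" using that unfolding A_def by simp
      ultimately show False using apart rtrancl_trans by fastforce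
    qed
    moreover have "z \<in> W" using that AW by blast
    ultimately have "reach (F - {e}) z u" using attached unfolding attached_def by blast
    then have "reach {e'\<in>F - {e}. e' \<subseteq> A} z u" by (rule reach_restrict[OF _ that]) (use closed in blast)
    then show ?thesis by (rule reach_mono) blast
  qed
  have "gconnected A ({e\<in>F. e \<subseteq> A} - {e})" for e
    using to_u by (rule gconnectedI_hub)
  moreover from this[of "{}"] have "gconnected A {e\<in>F. e \<subseteq> A}" by (rule gconnected_mono) blast
  ultimately show ?thesis unfolding two_edge_connected_def by blast
qed

lemma type_C_if_attached:
  assumes F: "simple_graph W F" and uv: "u \<in> W" "v \<in> W"
    and attached: "attached W F u v" and apart: "\<not> reach F u v"
  shows "type_C W F u v"
proof -
  define A where "A = {z. reach F u z}"
  define B where "B = {z. reach F v z}"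
  have classes: "W = A \<union> B" "A \<inter> B = {}" "\<forall>e\<in>F. e \<subseteq> A \<or> e \<subseteq> B"
    using terminal_classes[OF F uv _ apart] attached_reach[OF attached] unfolding A_def B_def by blast+
  have apart': "\<not> reach F v u" using apart reach_sym_iff[where F = F and x = u and y = v] by simp
  have "two_edge_connected A {e\<in>F. e \<subseteq> A}" "two_edge_connected B {e\<in>F. e \<subseteq> B}"
    using reach_class_two_edge_connected[OF F uv(1) attached apart]
      reach_class_two_edge_connected[OF F uv(2) attached_commute[OF attached] apart']
    unfolding A_def B_def by simp_all
  moreover have uA: "u \<in> A" and vB: "v \<in> B" unfolding A_def B_def by simp_all
  ultimately have "comps A {e\<in>F. e \<subseteq> A} = {A}" "comps B {e\<in>F. e \<subseteq> B} = {B}"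
    by (intro comps_two_edge_connected; blast)+
  moreover have "\<forall>e'\<in>F - {{}}. e' \<subseteq> A \<or> e' \<subseteq> B" using classes(3) by blast
  ultimately have comps: "comps W F = {A, B}" using comps_split[OF classes(1,2)] by auto
  then have cu: "comp_of W F u = A" and cv: "comp_of W F v = B"
    using comp_of_eq[of A W F u] comp_of_eq[of B W F v] uA vB by simp_all
  have fin: "finite W" "\<forall>e\<in>F. e \<subseteq> W"
    using F simple_graph_subset[OF F] unfolding simple_graph_def by blast+
  have AB: "A \<in> comps W F" "B \<in> comps W F" using comps by simp_all
  have "comp_of W F x = comp_of W F y" if "{x, y} \<in> F" for x y
  proof -
    have "{x, y} \<subseteq> A \<or> {x, y} \<subseteq> B" using classes(3) that by blast
    then show ?thesis by (elim disjE) (simp_all add: comp_of_eq[OF AB(1)] comp_of_eq[OF AB(2)])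
  qed
  then have "comp_edges W F = {}" unfolding comp_edges_eq[OF fin] by blast
  moreover have "A \<noteq> B" using uA classes(2) vB by blast
  ultimately show ?thesis unfolding type_C_def using comps cu cv by simp
qed

lemma attached_types:
  assumes "simple_graph W F" "u \<in> W" "v \<in> W" "attached W F u v"
  shows "type_A W F u v \<or> type_B W F u v \<or> type_C W F u v"
    and "type_C W F u v \<longleftrightarrow> \<not> reach F u v"
  using comp_path_types[OF comp_path_if_attached[OF assms]] type_C_if_attached[OF assms]
  by blast+

section \<open>The two sides of a 2-vertex-cut\<close>

locale vertex_separation =
  fixes V :: "'a set" and E :: "'a set set" and u v :: 'a and Vi Vj :: "'a set"
  assumes simple: "simple_graph V E"
    and terminals: "u \<in> V" "v \<in> V"
    and sides: "Vi \<union> Vj = V - {u, v}" "Vi \<inter> Vj = {}"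
    and no_cross_edges: "\<forall>a\<in>Vi. \<forall>b\<in>Vj. {a, b} \<notin> E"
begin

lemma swap_sides: "vertex_separation V E u v Vj Vi"
proof
  show "\<forall>a\<in>Vj. \<forall>b\<in>Vi. {a, b} \<notin> E" using no_cross_edges by (metis insert_commute)
qed (use simple terminals sides in auto)

lemma swap_terminals: "vertex_separation V E v u Vi Vj"
  using simple terminals sides no_cross_edges
  by unfold_locales (auto simp: insert_commute)

lemma edge_within_side:
  assumes "{a, b} \<in> E"
  shows "{a, b} \<subseteq> Vi \<union> {u, v} \<or> {a, b} \<subseteq> Vj \<union> {u, v}"
proof -
  have "a \<in> V" "b \<in> V" using simple_graph_edge[OF simple assms] by simp_all
  moreover have "\<not> (a \<in> Vi \<and> b \<in> Vj)" "\<not> (a \<in> Vj \<and> b \<in> Vi)"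
    using no_cross_edges assms by (auto simp: insert_commute)
  ultimately show ?thesis using sides(1) by blast
qed

lemma side_subset: "Vi \<union> {u, v} \<subseteq> V"
  using sides(1) terminals by blast

lemma simple_graph_side: "K \<subseteq> E \<Longrightarrow> simple_graph (Vi \<union> {u, v}) (K \<inter> induced_edges E (Vi \<union> {u, v}))"
  by (rule simple_graph_restrict[OF simple side_subset]) (auto simp: induced_edges_def)

lemma reach_terminal_within_side:
  assumes K: "K \<subseteq> E" "gconnected V K" and z: "z \<in> Vi \<union> {u, v}"
  shows "reach (K \<inter> induced_edges E (Vi \<union> {u, v})) z u \<or> reach (K \<inter> induced_edges E (Vi \<union> {u, v})) z v"
proof (rule ccontr)
  let ?Ki = "K \<inter> induced_edges E (Vi \<union> {u, v})"
  define T where "T = {y. reach ?Ki z y}"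
  assume "\<not> ?thesis"
  then have uv_T: "u \<notin> T" "v \<notin> T" unfolding T_def by simp_all
  have "z \<in> V" using z side_subset by blast
  then have "reach K z u" using K(2) terminals(1) unfolding gconnected_def by blast
  then have "u \<in> T"
  proof (rule reach_invariant)
    fix a b assume ab: "{a, b} \<in> K" "a \<in> T"
    have "T \<subseteq> Vi \<union> {u, v}" unfolding T_def by (rule reach_class_subset[OF simple_graph_side[OF K(1)] z])
    then have "a \<in> Vi" using ab(2) uv_T by blast
    then have "{a, b} \<subseteq> Vi \<union> {u, v}"
      using edge_within_side[of a b] ab(1) K(1) sides(2) uv_T ab(2) by blast
    then have "{a, b} \<in> ?Ki" using ab(1) K(1) unfolding induced_edges_def by blast
    then show "b \<in> T" using ab(2) reach_step[where F = ?Ki and x = z] unfolding T_def by simp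
  qed (simp add: T_def)
  with uv_T show False by simp
qed

lemma attached_side:
  assumes "K \<subseteq> E" "two_edge_connected V K"
  shows "attached (Vi \<union> {u, v}) (K \<inter> induced_edges E (Vi \<union> {u, v})) u v"
  unfolding attached_def
proof (intro allI ballI)
  fix e z assume "z \<in> Vi \<union> {u, v}"
  moreover have "K - {e} \<subseteq> E" using assms(1) by blast
  moreover note two_edge_connected_minus[OF assms(2)]
  moreover have "(K - {e}) \<inter> induced_edges E (Vi \<union> {u, v}) = K \<inter> induced_edges E (Vi \<union> {u, v}) - {e}"
    by blast
  ultimately show "reach (K \<inter> induced_edges E (Vi \<union> {u, v}) - {e}) z u \<or>
      reach (K \<inter> induced_edges E (Vi \<union> {u, v}) - {e}) z v"
    using reach_terminal_within_side[of "K - {e}" z] by simp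
qed

lemma reach_within_some_side:
  assumes K: "K \<subseteq> E" "gconnected V K"
  shows "reach (K \<inter> induced_edges E (Vi \<union> {u, v})) u v \<or> reach (K \<inter> induced_edges E (Vj \<union> {u, v})) u v"
proof (rule ccontr)
  define T where "T S = {y. reach (K \<inter> induced_edges E (S \<union> {u, v})) u y}" for S
  assume "\<not> ?thesis"
  then have v_T: "v \<notin> T Vi" "v \<notin> T Vj" unfolding T_def by simp_all
  have T_side: "T S \<subseteq> S \<union> {u, v}" for S
  proof
    fix y assume "y \<in> T S"
    then have "reach (K \<inter> induced_edges E (S \<union> {u, v})) u y" unfolding T_def by simp
    then show "y \<in> S \<union> {u, v}" by (rule reach_invariant) (auto simp: induced_edges_def)
  qed
  have step: "b \<in> T S" if "S \<in> {Vi, Vj}" "{a, b} \<in> K" "{a, b} \<subseteq> S \<union> {u, v}" "a \<in> T Vi \<union> T Vj" for S a b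
  proof -
    have "a \<in> T S"
    proof (cases "a = u")
      case False
      then have "a \<in> S" using that(3,4) T_side v_T by blast
      then show ?thesis using that(1,4) T_side sides(2) False v_T by blast
    qed (simp add: T_def)
    moreover have "{a, b} \<in> K \<inter> induced_edges E (S \<union> {u, v})"
      using that(2,3) K(1) unfolding induced_edges_def by blast
    ultimately show ?thesis unfolding T_def by (simp add: reach_step)
  qed
  have "reach K u v" using K(2) terminals unfolding gconnected_def by blast
  then have "v \<in> T Vi \<union> T Vj"
  proof (rule reach_invariant)
    fix a b assume "{a, b} \<in> K" "a \<in> T Vi \<union> T Vj"
    then show "b \<in> T Vi \<union> T Vj" using edge_within_side[of a b] K(1) step[of Vi a b] step[of Vj a b] by blast
  qed (simp add: T_def)
  with v_T show False by simp
qed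

lemma crossing_edge:
  assumes conn: "gconnected (V - {u}) {e\<in>E. u \<notin> e}" and "Vj \<noteq> {}"
    and A: "A \<subseteq> Vi \<union> {u, v}" "v \<notin> A" "z \<in> A" "z \<in> Vi"
  shows "\<exists>a\<in>A. \<exists>b\<in>(Vi \<union> {u, v}) - A. {a, b} \<in> E"
proof (rule ccontr)
  assume no_edge: "\<not> ?thesis"
  obtain w where w: "w \<in> Vj" using assms(2) by blast
  have "z \<in> V - {u}" "w \<in> V - {u}" using A(4) w sides(1) by blast+
  then have "reach {e\<in>E. u \<notin> e} z w" using conn unfolding gconnected_def by blast
  then have "w \<in> A - {u}"
  proof (rule reach_invariant)
    fix a b assume ab: "{a, b} \<in> {e\<in>E. u \<notin> e}" "a \<in> A - {u}"
    then have "a \<in> Vi" using A(1,2) by blast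
    then have "{a, b} \<subseteq> Vi \<union> {u, v}"
      using edge_within_side[of a b] ab sides(2) A(2) by blast
    then show "b \<in> A - {u}" using ab no_edge by blast
  qed (use A(3,4) sides(1) in blast)
  then show False using w A(1) sides by blast
qed

lemma ex_linking_edge_from_u_class:
  assumes conn: "gconnected (V - {u}) {e\<in>E. u \<notin> e}" and "Vj \<noteq> {}"
    and K: "K \<subseteq> E" "two_edge_connected V K"
    and apart: "\<not> reach (K \<inter> induced_edges E (Vi \<union> {u, v})) u v"
    and z: "z \<in> Vi" "reach (K \<inter> induced_edges E (Vi \<union> {u, v})) z u"
  shows "\<exists>f\<in>induced_edges E (Vi \<union> {u, v}). reach (K \<inter> induced_edges E (Vi \<union> {u, v}) \<union> {f}) u v"
proof -
  let ?W = "Vi \<union> {u, v}" and ?Ki = "K \<inter> induced_edges E (Vi \<union> {u, v})"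
  define A where "A = {y. reach ?Ki u y}"
  have "A \<subseteq> ?W" unfolding A_def by (rule reach_class_subset[OF simple_graph_side[OF K(1)]]) simp
  moreover have "v \<notin> A" "z \<in> A" using apart reach_sym[OF z(2)] unfolding A_def by simp_all
  ultimately obtain a b where ab: "a \<in> A" "b \<in> ?W - A" "{a, b} \<in> E"
    using crossing_edge[OF conn assms(2) _ _ _ z(1)] by blast
  have "reach ?Ki b u \<or> reach ?Ki b v" using attached_reach[OF attached_side[OF K]] ab(2) by blast
  moreover have "\<not> reach ?Ki b u"
    using ab(2) reach_sym_iff[where F = ?Ki and x = b and y = u] unfolding A_def by simp
  ultimately have bv: "reach ?Ki b v" by blast
  have f: "{a, b} \<in> induced_edges E ?W" using ab \<open>A \<subseteq> ?W\<close> unfolding induced_edges_def by blast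
  have "reach ?Ki u a" using ab(1) unfolding A_def by simp
  then have "reach (?Ki \<union> {{a, b}}) u a" by (rule reach_mono) blast
  also have "reach (?Ki \<union> {{a, b}}) a b" by (rule reach_edge) simp
  also have "reach (?Ki \<union> {{a, b}}) b v" using bv by (rule reach_mono) blast
  finally show ?thesis using f by blast
qed

lemma side_types:
  assumes "K \<subseteq> E" "two_edge_connected V K"
  shows "type_A (Vi \<union> {u, v}) (K \<inter> induced_edges E (Vi \<union> {u, v})) u v
      \<or> type_B (Vi \<union> {u, v}) (K \<inter> induced_edges E (Vi \<union> {u, v})) u v
      \<or> type_C (Vi \<union> {u, v}) (K \<inter> induced_edges E (Vi \<union> {u, v})) u v"
    and "type_C (Vi \<union> {u, v}) (K \<inter> induced_edges E (Vi \<union> {u, v})) u v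
      \<longleftrightarrow> \<not> reach (K \<inter> induced_edges E (Vi \<union> {u, v})) u v"
  using attached_types[OF simple_graph_side[OF assms(1)] _ _ attached_side[OF assms]] by simp_all

lemma other_side_type_A:
  assumes K: "K \<subseteq> E" "two_edge_connected V K"
    and apart: "\<not> reach (K \<inter> induced_edges E (Vi \<union> {u, v})) u v"
  shows "type_A (Vj \<union> {u, v}) (K \<inter> induced_edges E (Vj \<union> {u, v})) u v"
proof -
  let ?Kj = "K \<inter> induced_edges E (Vj \<union> {u, v})"
  have "gconnected (Vj \<union> {u, v}) (?Kj - {e})" for e
  proof (rule gconnected_if_reach_terminals)
    show "\<forall>z\<in>Vj \<union> {u, v}. reach (?Kj - {e}) z u \<or> reach (?Kj - {e}) z v"
      using vertex_separation.attached_side[OF swap_sides K] unfolding attached_def by blast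
    have KE: "K - {e} \<subseteq> E" using K(1) by blast
    have eq: "(K - {e}) \<inter> I = K \<inter> I - {e}" for I by blast
    have "reach (K \<inter> induced_edges E (Vi \<union> {u, v}) - {e}) u v \<or> reach (?Kj - {e}) u v"
      using reach_within_some_side[OF KE two_edge_connected_minus[OF K(2)]] unfolding eq .
    then show "reach (?Kj - {e}) u v"
      using apart reach_diff[where F = "K \<inter> induced_edges E (Vi \<union> {u, v})" and X = "{e}"] by blast
  qed
  then have "two_edge_connected (Vj \<union> {u, v}) ?Kj"
    unfolding two_edge_connected_def by (meson Diff_subset gconnected_mono)
  then show ?thesis by (rule type_A_if_two_edge_connected) (auto simp: induced_edges_def)
qed

lemma ex_linking_edge:
  assumes conn: "two_vertex_connected V E" and "Vi \<noteq> {}" "Vj \<noteq> {}"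
    and K: "K \<subseteq> E" "two_edge_connected V K"
    and apart: "\<not> reach (K \<inter> induced_edges E (Vi \<union> {u, v})) u v"
  shows "\<exists>f\<in>induced_edges E (Vi \<union> {u, v}). reach (K \<inter> induced_edges E (Vi \<union> {u, v}) \<union> {f}) u v"
proof -
  let ?Ki = "K \<inter> induced_edges E (Vi \<union> {u, v})"
  have conn_u: "gconnected (V - {u}) {e\<in>E. u \<notin> e}" and conn_v: "gconnected (V - {v}) {e\<in>E. v \<notin> e}"
    using conn terminals unfolding two_vertex_connected_def by blast+
  obtain z where z: "z \<in> Vi" using assms(2) by blast
  then have "reach ?Ki z u \<or> reach ?Ki z v" using attached_reach[OF attached_side[OF K]] by blast
  then show ?thesis
  proof
    assume "reach ?Ki z u"
    then show ?thesis using ex_linking_edge_from_u_class[OF conn_u assms(3) K apart z] by blast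
  next
    assume zv: "reach ?Ki z v"
    have apart': "\<not> reach ?Ki v u" using apart reach_sym_iff[where F = ?Ki and x = u] by simp
    have vu: "{v, u} = {u, v}" by (rule insert_commute)
    note link = vertex_separation.ex_linking_edge_from_u_class[OF swap_terminals conn_v assms(3) K, unfolded vu]
    obtain f where f: "f \<in> induced_edges E (Vi \<union> {u, v})" "reach (?Ki \<union> {f}) v u"
      using link[OF apart' z zv] by blast
    from f(2) have "reach (?Ki \<union> {f}) u v" by (rule reach_sym)
    with f(1) show ?thesis by blast
  qed
qed

lemma side_types_and_repair:
  assumes conn: "two_vertex_connected V E" and nonempty: "Vi \<noteq> {}" "Vj \<noteq> {}"
    and H: "H \<subseteq> E" "two_edge_connected V H"
  shows "(type_A (Vi \<union> {u, v}) (H \<inter> induced_edges E (Vi \<union> {u, v})) u v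
      \<or> type_B (Vi \<union> {u, v}) (H \<inter> induced_edges E (Vi \<union> {u, v})) u v
      \<or> type_C (Vi \<union> {u, v}) (H \<inter> induced_edges E (Vi \<union> {u, v})) u v)
   \<and> (type_C (Vi \<union> {u, v}) (H \<inter> induced_edges E (Vi \<union> {u, v})) u v
      \<longrightarrow> type_A (Vj \<union> {u, v}) (H \<inter> induced_edges E (Vj \<union> {u, v})) u v)
   \<and> (type_C (Vi \<union> {u, v}) (H \<inter> induced_edges E (Vi \<union> {u, v})) u v
      \<longrightarrow> (\<exists>f\<in>induced_edges E (Vi \<union> {u, v}).
             type_B (Vi \<union> {u, v}) (H \<inter> induced_edges E (Vi \<union> {u, v}) \<union> {f}) u v)
        \<and> (\<exists>H'. H' \<subseteq> E \<and> two_edge_connected V H' \<and>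
             (type_A (Vi \<union> {u, v}) (H' \<inter> induced_edges E (Vi \<union> {u, v})) u v
              \<or> type_B (Vi \<union> {u, v}) (H' \<inter> induced_edges E (Vi \<union> {u, v})) u v)))"
proof -
  let ?W = "Vi \<union> {u, v}"
  let ?Hi = "H \<inter> induced_edges E ?W"
  note types = side_types[OF H]
  have repaired: "(\<exists>f\<in>induced_edges E ?W. type_B ?W (?Hi \<union> {f}) u v)
      \<and> (\<exists>H'. H' \<subseteq> E \<and> two_edge_connected V H' \<and>
             (type_A ?W (H' \<inter> induced_edges E ?W) u v \<or> type_B ?W (H' \<inter> induced_edges E ?W) u v))"
    if apart: "\<not> reach ?Hi u v"
  proof -
    obtain f where f: "f \<in> induced_edges E ?W" "reach (?Hi \<union> {f}) u v"
      using ex_linking_edge[OF conn nonempty H apart] by blast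
    define H' where "H' = H \<union> {f}"
    have H': "H' \<subseteq> E" "two_edge_connected V H'"
      using H(1) f(1) two_edge_connected_mono[OF H(2), of H'] unfolding H'_def induced_edges_def by auto
    have H'_side: "H' \<inter> induced_edges E ?W = ?Hi \<union> {f}" using f(1) unfolding H'_def by blast
    have "\<not> type_A ?W (?Hi \<union> {f}) u v"
    proof
      assume "type_A ?W (?Hi \<union> {f}) u v"
      moreover have "finite ?W" using simple side_subset finite_subset unfolding simple_graph_def by blast
      ultimately have "reach (?Hi \<union> {f} - {f}) u v" by (rule type_A_reach_minus) simp_all
      then have "reach ?Hi u v" by (rule reach_mono) blast
      with apart show False ..
    qed
    then have "type_B ?W (?Hi \<union> {f}) u v" using side_types[OF H'] f(2) unfolding H'_side by blast
    then show ?thesis using f(1) H' H'_side by auto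
  qed
  show ?thesis using types other_side_type_A[OF H] repaired by blast
qed

end

theorem lemma11:
  fixes V :: "'a set" and E H :: "'a set set" and u v :: 'a and V1 V2 :: "'a set"
  assumes G: "simple_graph V E"
    and conn: "two_vertex_connected V E"
    and no_irr: "\<forall>e\<in>E. \<not> irrelevant_edge V E e"
    and cut: "two_vertex_cut V E u v"
    and part: "V1 \<noteq> {}" "V2 \<noteq> {}" "V1 \<union> V2 = V - {u, v}" "V1 \<inter> V2 = {}"
    and noedge: "\<forall>a\<in>V1. \<forall>b\<in>V2. {a, b} \<notin> E"
    and H: "H \<subseteq> E" "two_edge_connected V H"
  shows "\<forall>(Vi, Vj) \<in> {(V1, V2), (V2, V1)}.
     (type_A (Vi \<union> {u, v}) (H \<inter> induced_edges E (Vi \<union> {u, v})) u v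
      \<or> type_B (Vi \<union> {u, v}) (H \<inter> induced_edges E (Vi \<union> {u, v})) u v
      \<or> type_C (Vi \<union> {u, v}) (H \<inter> induced_edges E (Vi \<union> {u, v})) u v)
   \<and> (type_C (Vi \<union> {u, v}) (H \<inter> induced_edges E (Vi \<union> {u, v})) u v
      \<longrightarrow> type_A (Vj \<union> {u, v}) (H \<inter> induced_edges E (Vj \<union> {u, v})) u v)
   \<and> (type_C (Vi \<union> {u, v}) (H \<inter> induced_edges E (Vi \<union> {u, v})) u v
      \<longrightarrow> (\<exists>f\<in>induced_edges E (Vi \<union> {u, v}).
             type_B (Vi \<union> {u, v}) (H \<inter> induced_edges E (Vi \<union> {u, v}) \<union> {f}) u v)
        \<and> (\<exists>H'. H' \<subseteq> E \<and> two_edge_connected V H' \<and>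
             (type_A (Vi \<union> {u, v}) (H' \<inter> induced_edges E (Vi \<union> {u, v})) u v
              \<or> type_B (Vi \<union> {u, v}) (H' \<inter> induced_edges E (Vi \<union> {u, v})) u v)))"
proof -
  have uv: "u \<in> V" "v \<in> V" using cut unfolding two_vertex_cut_def by simp_all
  interpret sep: vertex_separation V E u v V1 V2
    using G uv part(3,4) noedge by unfold_locales
  interpret sep': vertex_separation V E u v V2 V1 by (rule sep.swap_sides)
  show ?thesis
    using sep.side_types_and_repair[OF conn part(1,2) H] sep'.side_types_and_repair[OF conn part(2,1) H] by simp
qed

end
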